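(* Let $F$ be a CNF formula with $n$ variables and clauses $C_1,\dots,C_m$, and let $A_F,B_F\subseteq\{0,1\}^m$ be defined as follows. Partition the variables into a first half $X_1$ and a second half $X_2$. For each assignment $\alpha$ to $X_1$, let $a^\alpha\in\{0,1\}^m$ have $a^\alpha_j=1$ iff $\alpha$ does not satisfy clause $C_j$ (no literal of $C_j$ over $X_1$ is made true by $\alpha$), and let $A_F=\{a^\alpha\}$; define $B_F$ analogously from assignments to $X_2$. Then $F$ is unsatisfiable if and only if there exists a monotone Boolean function $h\colon\{0,1\}^m\to\{0,1\}$ with $A_F\subseteq h^{-1}(1)$ and $\overline{B_F}\subseteq h^{-1}(0)$.
   Context: For $v\in\{0,1\}^m$, $\overline{v}$ is the vector obtained by flipping every coordinate, and $\overline{V}=\{\overline{v}:v\in V\}$. A Boolean function $h$ is monotone if $h(u)\ge h(v)$ whenever $u_i\ge v_i$ for all $i$. *)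

theory Defs
  imports Main
begin

(* A literal is a pair (v, p): variable index v, polarity p (True = positive x_v,
   False = negated x_v). *)
type_synonym literal = "nat \<times> bool"
type_synonym clause = "literal list"
type_synonym cnf = "clause list"

definition well_formed :: "nat \<Rightarrow> cnf \<Rightarrow> bool" where
  "well_formed n F \<longleftrightarrow> (\<forall>C\<in>set F. \<forall>(v,p)\<in>set C. v < n)"

definition lit_true :: "(nat \<Rightarrow> bool) \<Rightarrow> literal \<Rightarrow> bool" where
  "lit_true \<sigma> l \<longleftrightarrow> \<sigma> (fst l) = snd l"

definition satisfiable :: "cnf \<Rightarrow> bool" where
  "satisfiable F \<longleftrightarrow> (\<exists>\<sigma>. \<forall>C\<in>set F. \<exists>l\<in>set C. lit_true \<sigma> l)"

definition X1 :: "nat \<Rightarrow> nat set" where "X1 n = {..<n div 2}"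
definition X2 :: "nat \<Rightarrow> nat set" where "X2 n = {n div 2..<n}"

definition unsat_vec :: "nat set \<Rightarrow> cnf \<Rightarrow> (nat \<Rightarrow> bool) \<Rightarrow> bool list" where
  "unsat_vec X F \<alpha> = map (\<lambda>C. \<not> (\<exists>l\<in>set C. fst l \<in> X \<and> lit_true \<alpha> l)) F"

definition A_F :: "nat \<Rightarrow> cnf \<Rightarrow> bool list set" where
  "A_F n F = {unsat_vec (X1 n) F \<alpha> | \<alpha>. True}"

definition B_F :: "nat \<Rightarrow> cnf \<Rightarrow> bool list set" where
  "B_F n F = {unsat_vec (X2 n) F \<beta> | \<beta>. True}"

definition flip :: "bool list \<Rightarrow> bool list" where
  "flip v = map Not v"

(* h : {0,1}^m -> {0,1} monotone (only its values on lists of length m matter) *)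
definition monotone_on_cube :: "nat \<Rightarrow> (bool list \<Rightarrow> bool) \<Rightarrow> bool" where
  "monotone_on_cube m h \<longleftrightarrow>
     (\<forall>u v. length u = m \<and> length v = m \<and> (\<forall>i<m. v ! i \<le> u ! i) \<longrightarrow> h v \<le> h u)"

end

theory Submission
  imports Defs
begin

text \<open>Combining an assignment \<alpha> of the first half with an assignment \<beta> of the second half
  satisfies F exactly when no clause is falsified by both, i.e. when the vector of clauses
  falsified by \<alpha> lies coordinatewise below the complement of the vector of clauses falsified
  by \<beta>. So F is unsatisfiable iff no element of A_F lies below an element of the complement
  of B_F, and this is precisely the condition for the upward closure of A_F to be a monotone
  function separating A_F from the complement of B_F.\<close>

definition le_on_cube :: "nat \<Rightarrow> bool list \<Rightarrow> bool list \<Rightarrow> bool" where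
  "le_on_cube m u v \<longleftrightarrow> (\<forall>i<m. u ! i \<le> v ! i)"

lemma le_on_cube_refl: "le_on_cube m u u"
  by (simp add: le_on_cube_def)

lemma le_on_cube_trans: "le_on_cube m u v \<Longrightarrow> le_on_cube m v w \<Longrightarrow> le_on_cube m u w"
  unfolding le_on_cube_def by (meson order_trans)

lemma monotone_on_cube_iff:
  "monotone_on_cube m h \<longleftrightarrow>
     (\<forall>u v. length u = m \<longrightarrow> length v = m \<longrightarrow> le_on_cube m v u \<longrightarrow> h v \<le> h u)"
  by (auto simp: monotone_on_cube_def le_on_cube_def)

lemma monotone_separator_exists_iff:
  assumes "\<forall>a\<in>A. length a = m" and "\<forall>b\<in>N. length b = m"
  shows "(\<exists>h. monotone_on_cube m h \<and> (\<forall>a\<in>A. h a) \<and> (\<forall>b\<in>N. \<not> h b)) \<longleftrightarrow>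
    \<not> (\<exists>a\<in>A. \<exists>b\<in>N. le_on_cube m a b)"
proof
  assume "\<exists>h. monotone_on_cube m h \<and> (\<forall>a\<in>A. h a) \<and> (\<forall>b\<in>N. \<not> h b)"
  then obtain h where mono: "monotone_on_cube m h" and pos: "\<forall>a\<in>A. h a" and neg: "\<forall>b\<in>N. \<not> h b"
    by blast
  show "\<not> (\<exists>a\<in>A. \<exists>b\<in>N. le_on_cube m a b)"
  proof
    assume "\<exists>a\<in>A. \<exists>b\<in>N. le_on_cube m a b"
    then obtain a b where "a \<in> A" "b \<in> N" "le_on_cube m a b"
      by blast
    with mono assms have "h a \<le> h b"
      unfolding monotone_on_cube_iff by blast
    with \<open>a \<in> A\<close> \<open>b \<in> N\<close> pos neg show False
      by auto
  qed
next
  assume separated: "\<not> (\<exists>a\<in>A. \<exists>b\<in>N. le_on_cube m a b)"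
  define h where "h u \<longleftrightarrow> (\<exists>a\<in>A. le_on_cube m a u)" for u
  have "monotone_on_cube m h"
    unfolding monotone_on_cube_iff h_def using le_on_cube_trans by (blast intro: le_boolI)
  moreover have "\<forall>a\<in>A. h a"
    unfolding h_def using le_on_cube_refl by blast
  moreover have "\<forall>b\<in>N. \<not> h b"
    unfolding h_def using separated by blast
  ultimately show "\<exists>h. monotone_on_cube m h \<and> (\<forall>a\<in>A. h a) \<and> (\<forall>b\<in>N. \<not> h b)"
    by blast
qed

definition sat_on :: "nat set \<Rightarrow> (nat \<Rightarrow> bool) \<Rightarrow> clause \<Rightarrow> bool" where
  "sat_on X \<alpha> C \<longleftrightarrow> (\<exists>l\<in>set C. fst l \<in> X \<and> lit_true \<alpha> l)"

lemma satisfiable_iff_split: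
  assumes wf: "well_formed n F" and disjoint: "X \<inter> Y = {}" and cover: "{..<n} \<subseteq> X \<union> Y"
  shows "satisfiable F \<longleftrightarrow> (\<exists>\<alpha> \<beta>. \<forall>C\<in>set F. sat_on X \<alpha> C \<or> sat_on Y \<beta> C)"
proof
  assume "satisfiable F"
  then obtain \<sigma> where \<sigma>: "\<forall>C\<in>set F. \<exists>l\<in>set C. lit_true \<sigma> l"
    by (auto simp: satisfiable_def)
  have "sat_on X \<sigma> C \<or> sat_on Y \<sigma> C" if "C \<in> set F" for C
  proof -
    obtain l where "l \<in> set C" "lit_true \<sigma> l"
      using \<sigma> \<open>C \<in> set F\<close> by blast
    moreover have "fst l \<in> X \<union> Y"
      using wf \<open>C \<in> set F\<close> \<open>l \<in> set C\<close> cover unfolding well_formed_def by fastforce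
    ultimately show ?thesis
      unfolding sat_on_def by blast
  qed
  then show "\<exists>\<alpha> \<beta>. \<forall>C\<in>set F. sat_on X \<alpha> C \<or> sat_on Y \<beta> C"
    by blast
next
  assume "\<exists>\<alpha> \<beta>. \<forall>C\<in>set F. sat_on X \<alpha> C \<or> sat_on Y \<beta> C"
  then obtain \<alpha> \<beta> where split: "\<forall>C\<in>set F. sat_on X \<alpha> C \<or> sat_on Y \<beta> C"
    by blast
  define \<sigma> where "\<sigma> v = (if v \<in> X then \<alpha> v else \<beta> v)" for v
  have "sat_on X \<alpha> C \<Longrightarrow> sat_on X \<sigma> C" "sat_on Y \<beta> C \<Longrightarrow> sat_on Y \<sigma> C" for C
    using disjoint unfolding sat_on_def lit_true_def \<sigma>_def by auto
  then show "satisfiable F"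
    using split unfolding satisfiable_def sat_on_def by blast
qed

lemma le_on_cube_unsat_vec_flip_iff:
  "le_on_cube (length F) (unsat_vec X F \<alpha>) (flip (unsat_vec Y F \<beta>)) \<longleftrightarrow>
     (\<forall>C\<in>set F. sat_on X \<alpha> C \<or> sat_on Y \<beta> C)"
  by (auto simp: le_on_cube_def unsat_vec_def flip_def all_set_conv_all_nth[of F] simp flip: sat_on_def)

theorem lemma18:
  fixes n :: nat and F :: cnf
  assumes "well_formed n F"
  shows "\<not> satisfiable F \<longleftrightarrow>
    (\<exists>h. monotone_on_cube (length F) h \<and>
         (\<forall>a\<in>A_F n F. h a) \<and>
         (\<forall>b\<in>B_F n F. \<not> h (flip b)))"
proof -
  have "X1 n \<inter> X2 n = {}" "{..<n} \<subseteq> X1 n \<union> X2 n"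
    by (auto simp: X1_def X2_def)
  then have "satisfiable F \<longleftrightarrow> (\<exists>\<alpha> \<beta>.
      le_on_cube (length F) (unsat_vec (X1 n) F \<alpha>) (flip (unsat_vec (X2 n) F \<beta>)))"
    by (simp add: satisfiable_iff_split[OF assms] le_on_cube_unsat_vec_flip_iff)
  also have "\<dots> \<longleftrightarrow> (\<exists>a\<in>A_F n F. \<exists>b\<in>flip ` B_F n F. le_on_cube (length F) a b)"
    unfolding A_F_def B_F_def by blast
  finally have "satisfiable F \<longleftrightarrow> (\<exists>a\<in>A_F n F. \<exists>b\<in>flip ` B_F n F. le_on_cube (length F) a b)" .
  moreover have "\<forall>a\<in>A_F n F. length a = length F" "\<forall>b\<in>flip ` B_F n F. length b = length F"
    by (auto simp: A_F_def B_F_def unsat_vec_def flip_def)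
  ultimately show ?thesis
    using monotone_separator_exists_iff[where N = "flip ` B_F n F"] by simp
qed

end
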